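(* Let $\mathbf t:\mathcal D\to\mathcal T$ be a refinement system, $c:A\to B$ in $\mathcal T$, and $\phi$ a presheaf on $A^{+}$. Then $(c^{-})^*(\phi^{\perp_A})\cong\big((c^{+})_!\phi\big)^{\perp_B}$ as presheaves on $B^{-}$.
   Context: A refinement system is a functor $\mathbf{t}:\mathcal{D}\to\mathcal{T}$; composition is diagrammatic. Write $P\sqsubset A$ if $\mathbf t(P)=A$; a derivation of $P\Rightarrow_cQ$ is a morphism $\alpha:P\to Q$ with $\mathbf t(\alpha)=c$. For $B\in\mathcal T$: $B^{+}$ has objects $(P,c)$, $P\sqsubset X$, $c:X\to B$, morphisms $(P_1,c_1)\to(P_2,c_2)$ the derivations of $P_1\Rightarrow_eP_2$ with $c_1=e;c_2$; $B^{-}$ is the opposite of the category with objects $(d,R)$, $d:B\to Y$, $R\sqsubset Y$, morphisms $(d_1,R_1)\to(d_2,R_2)$ the derivations of $R_1\Rightarrow_eR_2$ with $d_1;e=d_2$. For $c:A\to B$: $c^{+}:A^{+}\to B^{+}$, $(P,e)\mapsto(P,e;c)$, and $c^{-}:B^{-}\to A^{-}$, $(d,R)\mapsto(c;d,R)$, both identity on derivations. $\mathrm{Jdg}(\mathbf t)$ has objects $(P,c,R)$ ($P\sqsubset X$, $c:X\to Y$, $R\sqsubset Y$) and morphisms $(P_1,c_1,R_1)\to(P_2,c_2,R_2)$ pairs of derivations $\beta$ of $P_1\Rightarrow_eP_2$, $\gamma$ of $R_2\Rightarrow_{e'}R_1$ with $c_1=e;c_2;e'$; $\mathrm{Der}:\mathrm{Jdg}(\mathbf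 t)^{op}\to\mathbf{Set}$ sends $(P,c,R)$ to the set of derivations of $P\Rightarrow_cR$ and $(\beta,\gamma)$ to $\alpha\mapsto\beta;\alpha;\gamma$. Bracket $\langle-\mid-\rangle_B:B^{+}\times B^{-}\to\mathrm{Jdg}(\mathbf t)$: $((P,c),(d,R))\mapsto(P,c;d,R)$, and on morphisms $(\beta,\gamma)\mapsto(\beta,\gamma)$. For a presheaf $\phi$ on $B^{+}$, $\phi^{\perp_B}$ is the presheaf on $B^{-}$ with $\phi^{\perp_B}(y)=$ the set of natural transformations $\phi\Rightarrow\mathrm{Der}(\langle-\mid y\rangle_B)$. For a functor $F:\mathcal X\to\mathcal Y$ and presheaves $\psi$ on $\mathcal Y$, $\chi$ on $\mathcal X$: $F^*\psi=\psi\circ F^{op}$ and $F_!\chi(y)=\int^{x}\mathcal Y(y,Fx)\times\chi(x)$. *)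

theory Defs
  imports Main "HOL-Library.FuncSet"
begin

record ('o, 'a) cat =
  Ob  :: "'o set"
  Ar  :: "'a set"
  Src :: "'a \<Rightarrow> 'o"
  Tgt :: "'a \<Rightarrow> 'o"
  Idt :: "'o \<Rightarrow> 'a"
  Cmp :: "'a \<Rightarrow> 'a \<Rightarrow> 'a"   (* Cmp f g = f ; g *)

definition hom :: "('o, 'a) cat \<Rightarrow> 'o \<Rightarrow> 'o \<Rightarrow> 'a set" where
  "hom C x y = {f \<in> Ar C. Src C f = x \<and> Tgt C f = y}"

definition category :: "('o, 'a) cat \<Rightarrow> bool" where
  "category C \<longleftrightarrow>
     (\<forall>f\<in>Ar C. Src C f \<in> Ob C \<and> Tgt C f \<in> Ob C) \<and>
     (\<forall>x\<in>Ob C. Idt C x \<in> hom C x x) \<and>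
     (\<forall>x\<in>Ob C. \<forall>y\<in>Ob C. \<forall>z\<in>Ob C. \<forall>f\<in>hom C x y. \<forall>g\<in>hom C y z. Cmp C f g \<in> hom C x z) \<and>
     (\<forall>f\<in>Ar C. Cmp C (Idt C (Src C f)) f = f \<and> Cmp C f (Idt C (Tgt C f)) = f) \<and>
     (\<forall>f\<in>Ar C. \<forall>g\<in>Ar C. \<forall>h\<in>Ar C. Tgt C f = Src C g \<longrightarrow> Tgt C g = Src C h \<longrightarrow>
         Cmp C (Cmp C f g) h = Cmp C f (Cmp C g h))"

definition opc :: "('o, 'a) cat \<Rightarrow> ('o, 'a) cat" where
  "opc C = \<lparr>Ob = Ob C, Ar = Ar C, Src = Tgt C, Tgt = Src C, Idt = Idt C,
            Cmp = (\<lambda>f g. Cmp C g f)\<rparr>"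

record ('o1, 'a1, 'o2, 'a2) ftr =
  FO :: "'o1 \<Rightarrow> 'o2"
  FA :: "'a1 \<Rightarrow> 'a2"

definition is_functor :: "('o1, 'a1) cat \<Rightarrow> ('o2, 'a2) cat \<Rightarrow> ('o1, 'a1, 'o2, 'a2) ftr \<Rightarrow> bool" where
  "is_functor C E F \<longleftrightarrow>
     (\<forall>x\<in>Ob C. FO F x \<in> Ob E) \<and>
     (\<forall>x\<in>Ob C. \<forall>y\<in>Ob C. \<forall>f\<in>hom C x y. FA F f \<in> hom E (FO F x) (FO F y)) \<and>
     (\<forall>x\<in>Ob C. FA F (Idt C x) = Idt E (FO F x)) \<and>
     (\<forall>f\<in>Ar C. \<forall>g\<in>Ar C. Tgt C f = Src C g \<longrightarrow> FA F (Cmp C f g) = Cmp E (FA F f) (FA F g))"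

record ('o, 'a, 'v) psh =
  PO :: "'o \<Rightarrow> 'v set"
  PA :: "'a \<Rightarrow> 'v \<Rightarrow> 'v"

definition presheaf :: "('o, 'a) cat \<Rightarrow> ('o, 'a, 'v) psh \<Rightarrow> bool" where
  "presheaf C P \<longleftrightarrow>
     (\<forall>x\<in>Ob C. \<forall>y\<in>Ob C. \<forall>f\<in>hom C x y. \<forall>v\<in>PO P y. PA P f v \<in> PO P x) \<and>
     (\<forall>x\<in>Ob C. \<forall>v\<in>PO P x. PA P (Idt C x) v = v) \<and>
     (\<forall>f\<in>Ar C. \<forall>g\<in>Ar C. Tgt C f = Src C g \<longrightarrow>
        (\<forall>v\<in>PO P (Tgt C g). PA P (Cmp C f g) v = PA P f (PA P g v)))"

definition psh_iso :: "('o, 'a) cat \<Rightarrow> ('o, 'a, 'v) psh \<Rightarrow> ('o, 'a, 'w) psh \<Rightarrow> bool" where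
  "psh_iso C P Q \<longleftrightarrow> (\<exists>\<eta>.
     (\<forall>x\<in>Ob C. bij_betw (\<eta> x) (PO P x) (PO Q x)) \<and>
     (\<forall>x\<in>Ob C. \<forall>y\<in>Ob C. \<forall>f\<in>hom C x y. \<forall>v\<in>PO P y. \<eta> x (PA P f v) = PA Q f (\<eta> y v)))"

definition pb :: "('o1, 'a1, 'o2, 'a2) ftr \<Rightarrow> ('o2, 'a2, 'v) psh \<Rightarrow> ('o1, 'a1, 'v) psh" where
  "pb F \<psi> = \<lparr>PO = (\<lambda>x. PO \<psi> (FO F x)), PA = (\<lambda>f. PA \<psi> (FA F f))\<rparr>"

text \<open>Left Kan extension F_! chi (y) = coend over x of Y(y, F x) x chi(x),
  realised as a quotient of triples (x, f, v) by the equivalence relation generated by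
  (x', f ; F g, w) ~ (x, f, chi(g) w) for g : x -> x'.\<close>
definition lan_triples :: "('xo, 'xa) cat \<Rightarrow> ('yo, 'ya) cat \<Rightarrow> ('xo, 'xa, 'yo, 'ya) ftr
    \<Rightarrow> ('xo, 'xa, 'v) psh \<Rightarrow> 'yo \<Rightarrow> ('xo \<times> 'ya \<times> 'v) set" where
  "lan_triples X Y F \<chi> y = {(x, f, v). x \<in> Ob X \<and> f \<in> hom Y y (FO F x) \<and> v \<in> PO \<chi> x}"

definition lan_gen :: "('xo, 'xa) cat \<Rightarrow> ('yo, 'ya) cat \<Rightarrow> ('xo, 'xa, 'yo, 'ya) ftr
    \<Rightarrow> ('xo, 'xa, 'v) psh \<Rightarrow> 'yo \<Rightarrow> (('xo \<times> 'ya \<times> 'v) \<times> ('xo \<times> 'ya \<times> 'v)) set" where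
  "lan_gen X Y F \<chi> y = {((x', Cmp Y f (FA F g), w), (x, f, PA \<chi> g w)) | x x' g f w.
      x \<in> Ob X \<and> x' \<in> Ob X \<and> g \<in> hom X x x' \<and> f \<in> hom Y y (FO F x) \<and> w \<in> PO \<chi> x'}"

definition lan_rel :: "('xo, 'xa) cat \<Rightarrow> ('yo, 'ya) cat \<Rightarrow> ('xo, 'xa, 'yo, 'ya) ftr
    \<Rightarrow> ('xo, 'xa, 'v) psh \<Rightarrow> 'yo \<Rightarrow> (('xo \<times> 'ya \<times> 'v) \<times> ('xo \<times> 'ya \<times> 'v)) set" where
  "lan_rel X Y F \<chi> y = ((lan_gen X Y F \<chi> y \<union> (lan_gen X Y F \<chi> y)\<inverse>)\<^sup>*)
      \<inter> (lan_triples X Y F \<chi> y \<times> lan_triples X Y F \<chi> y)"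

definition lan :: "('xo, 'xa) cat \<Rightarrow> ('yo, 'ya) cat \<Rightarrow> ('xo, 'xa, 'yo, 'ya) ftr
    \<Rightarrow> ('xo, 'xa, 'v) psh \<Rightarrow> ('yo, 'ya, ('xo \<times> 'ya \<times> 'v) set) psh" where
  "lan X Y F \<chi> =
     \<lparr>PO = (\<lambda>y. lan_triples X Y F \<chi> y // lan_rel X Y F \<chi> y),
      PA = (\<lambda>h S. let (x, f, v) = (SOME s. s \<in> S)
                   in lan_rel X Y F \<chi> (Src Y h) `` {(x, Cmp Y h f, v)})\<rparr>"

definition refinement_system :: "('do, 'da) cat \<Rightarrow> ('to, 'ta) cat \<Rightarrow> ('do, 'da, 'to, 'ta) ftr \<Rightarrow> bool" where
  "refinement_system D T t \<longleftrightarrow> category D \<and> category T \<and> is_functor D T t"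

definition derivs :: "('do, 'da) cat \<Rightarrow> ('to, 'ta) cat \<Rightarrow> ('do, 'da, 'to, 'ta) ftr
    \<Rightarrow> 'do \<Rightarrow> 'ta \<Rightarrow> 'do \<Rightarrow> 'da set" where
  "derivs D T t P c Q = {\<alpha> \<in> hom D P Q. FA t \<alpha> = c}"

definition Bplus :: "('do, 'da) cat \<Rightarrow> ('to, 'ta) cat \<Rightarrow> ('do, 'da, 'to, 'ta) ftr \<Rightarrow> 'to
    \<Rightarrow> ('do \<times> 'ta, ('do \<times> 'ta) \<times> 'da \<times> ('do \<times> 'ta)) cat" where
  "Bplus D T t B =
    (let Os = {(P, c). P \<in> Ob D \<and> c \<in> hom T (FO t P) B} in
     \<lparr>Ob = Os,
      Ar = {(x1, \<alpha>, x2). x1 \<in> Os \<and> x2 \<in> Os \<and>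
              (\<exists>e. \<alpha> \<in> derivs D T t (fst x1) e (fst x2) \<and> snd x1 = Cmp T e (snd x2))},
      Src = (\<lambda>(x1, \<alpha>, x2). x1), Tgt = (\<lambda>(x1, \<alpha>, x2). x2),
      Idt = (\<lambda>x. (x, Idt D (fst x), x)),
      Cmp = (\<lambda>(x1, \<alpha>, x2) (y1, \<beta>, y2). (x1, Cmp D \<alpha> \<beta>, y2))\<rparr>)"

definition Bminus_op :: "('do, 'da) cat \<Rightarrow> ('to, 'ta) cat \<Rightarrow> ('do, 'da, 'to, 'ta) ftr \<Rightarrow> 'to
    \<Rightarrow> ('ta \<times> 'do, ('ta \<times> 'do) \<times> 'da \<times> ('ta \<times> 'do)) cat" where
  "Bminus_op D T t B =
    (let Os = {(d, R). R \<in> Ob D \<and> d \<in> hom T B (FO t R)} in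
     \<lparr>Ob = Os,
      Ar = {(y1, \<gamma>, y2). y1 \<in> Os \<and> y2 \<in> Os \<and>
              (\<exists>e. \<gamma> \<in> derivs D T t (snd y1) e (snd y2) \<and> Cmp T (fst y1) e = fst y2)},
      Src = (\<lambda>(y1, \<gamma>, y2). y1), Tgt = (\<lambda>(y1, \<gamma>, y2). y2),
      Idt = (\<lambda>y. (y, Idt D (snd y), y)),
      Cmp = (\<lambda>(x1, \<alpha>, x2) (y1, \<beta>, y2). (x1, Cmp D \<alpha> \<beta>, y2))\<rparr>)"

definition Bminus :: "('do, 'da) cat \<Rightarrow> ('to, 'ta) cat \<Rightarrow> ('do, 'da, 'to, 'ta) ftr \<Rightarrow> 'to
    \<Rightarrow> ('ta \<times> 'do, ('ta \<times> 'do) \<times> 'da \<times> ('ta \<times> 'do)) cat" where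
  "Bminus D T t B = opc (Bminus_op D T t B)"

definition cplus :: "('to, 'ta) cat \<Rightarrow> 'ta
    \<Rightarrow> ('do \<times> 'ta, ('do \<times> 'ta) \<times> 'da \<times> ('do \<times> 'ta), 'do \<times> 'ta, ('do \<times> 'ta) \<times> 'da \<times> ('do \<times> 'ta)) ftr" where
  "cplus T c = (let g = (\<lambda>(P, e). (P, Cmp T e c)) in
     \<lparr>FO = g, FA = (\<lambda>(x1, \<alpha>, x2). (g x1, \<alpha>, g x2))\<rparr>)"

definition cminus :: "('to, 'ta) cat \<Rightarrow> 'ta
    \<Rightarrow> ('ta \<times> 'do, ('ta \<times> 'do) \<times> 'da \<times> ('ta \<times> 'do), 'ta \<times> 'do, ('ta \<times> 'do) \<times> 'da \<times> ('ta \<times> 'do)) ftr" where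
  "cminus T c = (let g = (\<lambda>(d, R). (Cmp T c d, R)) in
     \<lparr>FO = g, FA = (\<lambda>(y1, \<gamma>, y2). (g y1, \<gamma>, g y2))\<rparr>)"

definition Jdg :: "('do, 'da) cat \<Rightarrow> ('to, 'ta) cat \<Rightarrow> ('do, 'da, 'to, 'ta) ftr
    \<Rightarrow> ('do \<times> 'ta \<times> 'do, ('do \<times> 'ta \<times> 'do) \<times> ('da \<times> 'da) \<times> ('do \<times> 'ta \<times> 'do)) cat" where
  "Jdg D T t =
    (let Os = {(P, c, R). P \<in> Ob D \<and> R \<in> Ob D \<and> c \<in> hom T (FO t P) (FO t R)} in
     \<lparr>Ob = Os,
      Ar = {((P1, c1, R1), (\<beta>, \<gamma>), (P2, c2, R2)). (P1, c1, R1) \<in> Os \<and> (P2, c2, R2) \<in> Os \<and>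
              (\<exists>e e'. \<beta> \<in> derivs D T t P1 e P2 \<and> \<gamma> \<in> derivs D T t R2 e' R1 \<and>
                      c1 = Cmp T (Cmp T e c2) e')},
      Src = (\<lambda>(j1, _, j2). j1), Tgt = (\<lambda>(j1, _, j2). j2),
      Idt = (\<lambda>(P, c, R). ((P, c, R), (Idt D P, Idt D R), (P, c, R))),
      Cmp = (\<lambda>(j1, (\<beta>, \<gamma>), j2) (k1, (\<beta>', \<gamma>'), k2). (j1, (Cmp D \<beta> \<beta>', Cmp D \<gamma>' \<gamma>), k2))\<rparr>)"

definition Der :: "('do, 'da) cat \<Rightarrow> ('to, 'ta) cat \<Rightarrow> ('do, 'da, 'to, 'ta) ftr
    \<Rightarrow> ('do \<times> 'ta \<times> 'do, ('do \<times> 'ta \<times> 'do) \<times> ('da \<times> 'da) \<times> ('do \<times> 'ta \<times> 'do), 'da) psh" where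
  "Der D T t = \<lparr>PO = (\<lambda>(P, c, R). derivs D T t P c R),
                PA = (\<lambda>(j1, (\<beta>, \<gamma>), j2) \<alpha>. Cmp D (Cmp D \<beta> \<alpha>) \<gamma>)\<rparr>"

text \<open>The bracket functor B^+ x B^- -> Jdg(t), on objects and on pairs of arrows
  (an arrow of B^- is an arrow (y1, gamma, y2) of Bminus_op read backwards).\<close>
definition bracketO :: "('to, 'ta) cat \<Rightarrow> 'do \<times> 'ta \<Rightarrow> 'ta \<times> 'do \<Rightarrow> 'do \<times> 'ta \<times> 'do" where
  "bracketO T x y = (fst x, Cmp T (snd x) (fst y), snd y)"

definition bracketA :: "('to, 'ta) cat \<Rightarrow> ('do \<times> 'ta) \<times> 'da \<times> ('do \<times> 'ta)
    \<Rightarrow> ('ta \<times> 'do) \<times> 'da \<times> ('ta \<times> 'do) \<Rightarrow> ('do \<times> 'ta \<times> 'do) \<times> ('da \<times> 'da) \<times> ('do \<times> 'ta \<times> 'do)" where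
  "bracketA T f g = (case f of (x1, \<beta>, x2) \<Rightarrow> case g of (y1, \<gamma>, y2) \<Rightarrow>
      (bracketO T x1 y2, (\<beta>, \<gamma>), bracketO T x2 y1))"

text \<open>phi^{perp_B}: y |-> natural transformations phi => Der(<- | y>_B).
  Natural transformations are represented as extensional families of functions.\<close>
definition perp :: "('do, 'da) cat \<Rightarrow> ('to, 'ta) cat \<Rightarrow> ('do, 'da, 'to, 'ta) ftr \<Rightarrow> 'to
    \<Rightarrow> ('do \<times> 'ta, ('do \<times> 'ta) \<times> 'da \<times> ('do \<times> 'ta), 'v) psh
    \<Rightarrow> ('ta \<times> 'do, ('ta \<times> 'do) \<times> 'da \<times> ('ta \<times> 'do), ('do \<times> 'ta) \<Rightarrow> 'v \<Rightarrow> 'da) psh" where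
  "perp D T t B \<phi> =
    (let BP = Bplus D T t B; BM = Bminus D T t B in
     \<lparr>PO = (\<lambda>y. {\<theta> \<in> (\<Pi>\<^sub>E x\<in>Ob BP. (PO \<phi> x \<rightarrow>\<^sub>E PO (Der D T t) (bracketO T x y))).
                  \<forall>f\<in>Ar BP. \<forall>v\<in>PO \<phi> (Tgt BP f).
                    \<theta> (Src BP f) (PA \<phi> f v)
                      = PA (Der D T t) (bracketA T f (Idt BM y)) (\<theta> (Tgt BP f) v)}),
      PA = (\<lambda>g \<theta>. (\<lambda>x\<in>Ob BP. \<lambda>v\<in>PO \<phi> x.
                      PA (Der D T t) (bracketA T (Idt BP x) g) (\<theta> x v)))\<rparr>)"

end

theory Submission
  imports Defs
begin

text \<open>Restriction along \<open>c\<^sup>+\<close> is right adjoint to \<open>(c\<^sup>+)\<^sub>!\<close>: a natural transformation out of the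
  coend \<open>(c\<^sup>+)\<^sub>!\<phi>\<close> is determined by its values on the classes \<open>[x, id, v]\<close>, which gives a
  bijection \<open>hom((c\<^sup>+)\<^sub>!\<phi>, \<psi>) \<cong> hom(\<phi>, (c\<^sup>+)\<^sup>*\<psi>)\<close>, natural in \<open>\<psi>\<close>. Take \<open>\<psi> = Der(\<langle>- | y\<rangle>\<^sub>B)\<close>:
  by associativity in \<open>\<T>\<close>, \<open>(c\<^sup>+)\<^sup>*Der(\<langle>- | y\<rangle>\<^sub>B) = Der(\<langle>- | c\<^sup>-y\<rangle>\<^sub>A)\<close>, so the two sides are
  \<open>((c\<^sup>+)\<^sub>!\<phi>)\<^sup>\<bottom>(y)\<close> and \<open>\<phi>\<^sup>\<bottom>(c\<^sup>-y)\<close>. An arrow of \<open>B\<^sup>-\<close> acts on both by postcomposing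
  derivations, which is a morphism \<open>Der(\<langle>- | y'\<rangle>\<^sub>B) \<Rightarrow> Der(\<langle>- | y\<rangle>\<^sub>B)\<close>, so naturality in \<open>\<psi>\<close>
  gives naturality in \<open>y\<close>.\<close>

lemma category_hom_Ob:
  "category C \<Longrightarrow> f \<in> hom C x y \<Longrightarrow> x \<in> Ob C \<and> y \<in> Ob C"
  unfolding category_def hom_def by auto

lemma category_Idt_hom: "category C \<Longrightarrow> x \<in> Ob C \<Longrightarrow> Idt C x \<in> hom C x x"
  unfolding category_def by auto

lemma category_Cmp_hom:
  "category C \<Longrightarrow> f \<in> hom C x y \<Longrightarrow> g \<in> hom C y z \<Longrightarrow> Cmp C f g \<in> hom C x z"
  using category_hom_Ob[of C f x y] category_hom_Ob[of C g y z] unfolding category_def by blast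

lemma category_Cmp_Idt_left: "category C \<Longrightarrow> f \<in> hom C x y \<Longrightarrow> Cmp C (Idt C x) f = f"
  unfolding category_def hom_def by auto

lemma category_Cmp_Idt_right: "category C \<Longrightarrow> f \<in> hom C x y \<Longrightarrow> Cmp C f (Idt C y) = f"
  unfolding category_def hom_def by auto

lemma category_Cmp_assoc:
  "category C \<Longrightarrow> f \<in> hom C x y \<Longrightarrow> g \<in> hom C y z \<Longrightarrow> h \<in> hom C z w
    \<Longrightarrow> Cmp C (Cmp C f g) h = Cmp C f (Cmp C g h)"
  unfolding category_def hom_def by auto

lemma functor_Ob: "is_functor C E F \<Longrightarrow> x \<in> Ob C \<Longrightarrow> FO F x \<in> Ob E"
  unfolding is_functor_def by blast

lemma functor_hom:
  "is_functor C E F \<Longrightarrow> category C \<Longrightarrow> f \<in> hom C x y \<Longrightarrow> FA F f \<in> hom E (FO F x) (FO F y)"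
  using category_hom_Ob[of C f x y] unfolding is_functor_def by blast

lemma functor_Idt: "is_functor C E F \<Longrightarrow> x \<in> Ob C \<Longrightarrow> FA F (Idt C x) = Idt E (FO F x)"
  unfolding is_functor_def by blast

lemma functor_Cmp:
  "is_functor C E F \<Longrightarrow> f \<in> hom C x y \<Longrightarrow> g \<in> hom C y z
    \<Longrightarrow> FA F (Cmp C f g) = Cmp E (FA F f) (FA F g)"
  unfolding is_functor_def hom_def by auto

lemma presheaf_PA_closed:
  "category C \<Longrightarrow> presheaf C P \<Longrightarrow> f \<in> hom C x y \<Longrightarrow> v \<in> PO P y \<Longrightarrow> PA P f v \<in> PO P x"
  using category_hom_Ob[of C f x y] unfolding presheaf_def by blast

lemma presheaf_PA_Idt: "presheaf C P \<Longrightarrow> x \<in> Ob C \<Longrightarrow> v \<in> PO P x \<Longrightarrow> PA P (Idt C x) v = v"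
  unfolding presheaf_def by blast

lemma presheaf_PA_Cmp:
  "presheaf C P \<Longrightarrow> f \<in> hom C x y \<Longrightarrow> g \<in> hom C y z \<Longrightarrow> v \<in> PO P z
    \<Longrightarrow> PA P (Cmp C f g) v = PA P f (PA P g v)"
  unfolding presheaf_def hom_def by auto

lemma pb_simps [simp]:
  "PO (pb F \<psi>) x = PO \<psi> (FO F x)"
  "PA (pb F \<psi>) f = PA \<psi> (FA F f)"
  by (simp_all add: pb_def)

definition nat_trans :: "('o, 'a) cat \<Rightarrow> ('o, 'a, 'v) psh \<Rightarrow> ('o, 'a, 'w) psh
    \<Rightarrow> ('o \<Rightarrow> 'v \<Rightarrow> 'w) \<Rightarrow> bool" where
  "nat_trans C P Q \<theta> \<longleftrightarrow> (\<forall>x\<in>Ob C. \<theta> x \<in> PO P x \<rightarrow> PO Q x) \<and>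
     (\<forall>f\<in>Ar C. \<forall>v\<in>PO P (Tgt C f). \<theta> (Src C f) (PA P f v) = PA Q f (\<theta> (Tgt C f) v))"

text \<open>\<open>nat_trans\<close> does not require extensionality, so families given by a formula (such as
  postcomposition) qualify; \<open>psh_hom\<close> is the extensional hom-set, as in \<open>perp\<close>.\<close>
definition psh_hom :: "('o, 'a) cat \<Rightarrow> ('o, 'a, 'v) psh \<Rightarrow> ('o, 'a, 'w) psh
    \<Rightarrow> ('o \<Rightarrow> 'v \<Rightarrow> 'w) set" where
  "psh_hom C P Q = {\<theta> \<in> (\<Pi>\<^sub>E x\<in>Ob C. PO P x \<rightarrow>\<^sub>E PO Q x). nat_trans C P Q \<theta>}"

definition psh_vcomp :: "('o, 'a) cat \<Rightarrow> ('o, 'a, 'u) psh \<Rightarrow> ('o \<Rightarrow> 'u \<Rightarrow> 'v)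
    \<Rightarrow> ('o \<Rightarrow> 'v \<Rightarrow> 'w) \<Rightarrow> 'o \<Rightarrow> 'u \<Rightarrow> 'w" where
  "psh_vcomp C P \<theta> \<mu> = (\<lambda>x\<in>Ob C. \<lambda>v\<in>PO P x. \<mu> x (\<theta> x v))"

lemma nat_trans_PO: "nat_trans C P Q \<theta> \<Longrightarrow> x \<in> Ob C \<Longrightarrow> v \<in> PO P x \<Longrightarrow> \<theta> x v \<in> PO Q x"
  unfolding nat_trans_def by blast

lemma nat_trans_PA:
  "nat_trans C P Q \<theta> \<Longrightarrow> f \<in> hom C x y \<Longrightarrow> v \<in> PO P y \<Longrightarrow> \<theta> x (PA P f v) = PA Q f (\<theta> y v)"
  unfolding nat_trans_def hom_def by blast

lemma nat_transI:
  assumes "\<And>x v. x \<in> Ob C \<Longrightarrow> v \<in> PO P x \<Longrightarrow> \<theta> x v \<in> PO Q x"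
    and "\<And>f x y v. f \<in> hom C x y \<Longrightarrow> v \<in> PO P y \<Longrightarrow> \<theta> x (PA P f v) = PA Q f (\<theta> y v)"
  shows "nat_trans C P Q \<theta>"
  using assms unfolding nat_trans_def hom_def by blast

lemma psh_hom_nat_trans: "\<theta> \<in> psh_hom C P Q \<Longrightarrow> nat_trans C P Q \<theta>"
  unfolding psh_hom_def by blast

lemma psh_hom_iff:
  "\<theta> \<in> psh_hom C P Q \<longleftrightarrow> \<theta> \<in> (\<Pi>\<^sub>E x\<in>Ob C. PO P x \<rightarrow>\<^sub>E PO Q x) \<and>
     (\<forall>f\<in>Ar C. \<forall>v\<in>PO P (Tgt C f). \<theta> (Src C f) (PA P f v) = PA Q f (\<theta> (Tgt C f) v))"
proof -
  have "\<theta> x \<in> PO P x \<rightarrow> PO Q x" if "\<theta> \<in> (\<Pi>\<^sub>E x\<in>Ob C. PO P x \<rightarrow>\<^sub>E PO Q x)" "x \<in> Ob C" for x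
    using PiE_mem[OF that] by (simp add: PiE_def)
  then show ?thesis
    unfolding psh_hom_def nat_trans_def by blast
qed

lemma psh_hom_restrict:
  assumes "nat_trans C P Q (\<lambda>x\<in>Ob C. \<lambda>v\<in>PO P x. \<theta> x v)"
  shows "(\<lambda>x\<in>Ob C. \<lambda>v\<in>PO P x. \<theta> x v) \<in> psh_hom C P Q"
proof -
  have "(\<lambda>v\<in>PO P x. \<theta> x v) \<in> PO P x \<rightarrow>\<^sub>E PO Q x" if "x \<in> Ob C" for x
    using nat_trans_PO[OF assms that] that by (simp add: restrict_PiE_iff)
  then show ?thesis
    using assms by (simp add: psh_hom_def restrict_PiE_iff)
qed

lemma psh_hom_eqI:
  assumes \<theta>: "\<theta> \<in> psh_hom C P Q" and \<theta>': "\<theta>' \<in> psh_hom C P Q"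
    and eq: "\<And>x v. x \<in> Ob C \<Longrightarrow> v \<in> PO P x \<Longrightarrow> \<theta> x v = \<theta>' x v"
  shows "\<theta> = \<theta>'"
proof -
  have ext: "\<theta> \<in> (\<Pi>\<^sub>E x\<in>Ob C. PO P x \<rightarrow>\<^sub>E PO Q x)" "\<theta>' \<in> (\<Pi>\<^sub>E x\<in>Ob C. PO P x \<rightarrow>\<^sub>E PO Q x)"
    using \<theta> \<theta>' unfolding psh_hom_def by blast+
  show ?thesis
  proof (rule PiE_ext[OF ext])
    fix x assume x: "x \<in> Ob C"
    show "\<theta> x = \<theta>' x"
      by (rule PiE_ext[OF PiE_mem[OF ext(1) x] PiE_mem[OF ext(2) x]]) (rule eq[OF x])
  qed
qed

lemma psh_hom_cong:
  assumes PO: "\<And>x. x \<in> Ob C \<Longrightarrow> PO Q x = PO Q' x" and PA: "\<And>f. f \<in> Ar C \<Longrightarrow> PA Q f = PA Q' f"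
  shows "psh_hom C P Q = psh_hom C P Q'"
proof -
  have "nat_trans C P Q \<theta> \<longleftrightarrow> nat_trans C P Q' \<theta>" for \<theta>
    unfolding nat_trans_def using PO PA by auto
  moreover have "(\<Pi>\<^sub>E x\<in>Ob C. PO P x \<rightarrow>\<^sub>E PO Q x) = (\<Pi>\<^sub>E x\<in>Ob C. PO P x \<rightarrow>\<^sub>E PO Q' x)"
    by (rule PiE_cong) (simp add: PO)
  ultimately show ?thesis
    unfolding psh_hom_def by simp
qed

lemma nat_trans_vcomp:
  assumes C: "category C" and P: "presheaf C P"
    and \<theta>: "nat_trans C P Q \<theta>" and \<mu>: "nat_trans C Q R \<mu>"
  shows "nat_trans C P R (psh_vcomp C P \<theta> \<mu>)"
proof (rule nat_transI)
  fix x v assume "x \<in> Ob C" "v \<in> PO P x"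
  then show "psh_vcomp C P \<theta> \<mu> x v \<in> PO R x"
    by (simp add: psh_vcomp_def nat_trans_PO[OF \<mu>] nat_trans_PO[OF \<theta>])
next
  fix f x y v assume f: "f \<in> hom C x y" and v: "v \<in> PO P y"
  have xy: "x \<in> Ob C" "y \<in> Ob C" using category_hom_Ob[OF C f] by auto
  have "PA P f v \<in> PO P x" by (rule presheaf_PA_closed[OF C P f v])
  then show "psh_vcomp C P \<theta> \<mu> x (PA P f v) = PA R f (psh_vcomp C P \<theta> \<mu> y v)"
    using xy v by (simp add: psh_vcomp_def nat_trans_PA[OF \<theta> f v]
        nat_trans_PA[OF \<mu> f nat_trans_PO[OF \<theta> xy(2) v]])
qed

lemma nat_trans_pb:
  assumes "category X" and F: "is_functor X Y F" and \<mu>: "nat_trans Y Q R \<mu>"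
  shows "nat_trans X (pb F Q) (pb F R) (\<lambda>x. \<mu> (FO F x))"
proof (rule nat_transI)
  fix x v assume "x \<in> Ob X" "v \<in> PO (pb F Q) x"
  then show "\<mu> (FO F x) v \<in> PO (pb F R) x"
    by (simp add: nat_trans_PO[OF \<mu>] functor_Ob[OF F])
next
  fix f x y v assume "f \<in> hom X x y" "v \<in> PO (pb F Q) y"
  then show "\<mu> (FO F x) (PA (pb F Q) f v) = PA (pb F R) f (\<mu> (FO F y) v)"
    by (simp add: nat_trans_PA[OF \<mu>] functor_hom[OF F \<open>category X\<close>])
qed

section \<open>The left Kan extension as a left adjoint\<close>

lemma equiv_symcl_rtrancl_restrict: "equiv A ((r \<union> r\<inverse>)\<^sup>* \<inter> A \<times> A)"
proof (rule equivI)
  show "sym ((r \<union> r\<inverse>)\<^sup>* \<inter> A \<times> A)"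
    using sym_rtrancl[OF sym_Un_converse[of r]] by (auto simp: sym_def)
  show "trans ((r \<union> r\<inverse>)\<^sup>* \<inter> A \<times> A)"
    by (intro trans_Int trans_rtrancl) (auto simp: trans_def)
qed (auto simp: refl_on_def)

lemma rtrancl_symcl_invariant:
  assumes "\<And>a b. (a, b) \<in> r \<Longrightarrow> g a = g b" and "(a, b) \<in> (r \<union> r\<inverse>)\<^sup>*"
  shows "g a = g b"
  using assms(2) by induction (auto dest: assms(1))

lemma rtrancl_symcl_map:
  assumes "\<And>a b. (a, b) \<in> r \<Longrightarrow> (h a, h b) \<in> s" and "(a, b) \<in> (r \<union> r\<inverse>)\<^sup>*"
  shows "(h a, h b) \<in> (s \<union> s\<inverse>)\<^sup>*"
  using assms(2)
proof induction
  case (step b c)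
  then have "(h b, h c) \<in> s \<union> s\<inverse>" using assms(1) by blast
  with step.IH show ?case by (rule rtrancl_into_rtrancl)
qed simp

locale left_kan_extension =
  fixes X :: "('xo, 'xa) cat" and Y :: "('yo, 'ya) cat" and F :: "('xo, 'xa, 'yo, 'ya) ftr"
    and \<chi> :: "('xo, 'xa, 'v) psh"
  assumes X: "category X" and Y: "category Y" and F: "is_functor X Y F" and \<chi>: "presheaf X \<chi>"
begin

abbreviation "triples \<equiv> lan_triples X Y F \<chi>"
abbreviation "gen \<equiv> lan_gen X Y F \<chi>"
abbreviation "rel \<equiv> lan_rel X Y F \<chi>"
abbreviation "Lan \<equiv> lan X Y F \<chi>"

lemma triples_iff: "(x, f, v) \<in> triples y \<longleftrightarrow> x \<in> Ob X \<and> f \<in> hom Y y (FO F x) \<and> v \<in> PO \<chi> x"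
  unfolding lan_triples_def by simp

lemma lan_genI:
  "g \<in> hom X x x' \<Longrightarrow> f \<in> hom Y y (FO F x) \<Longrightarrow> w \<in> PO \<chi> x'
    \<Longrightarrow> ((x', Cmp Y f (FA F g), w), (x, f, PA \<chi> g w)) \<in> gen y"
  using category_hom_Ob[OF X] unfolding lan_gen_def by blast

lemma lan_genE:
  assumes "(a, b) \<in> gen y"
  obtains x x' g f w where "a = (x', Cmp Y f (FA F g), w)" "b = (x, f, PA \<chi> g w)"
    "g \<in> hom X x x'" "f \<in> hom Y y (FO F x)" "w \<in> PO \<chi> x'"
  using assms unfolding lan_gen_def by blast

lemma lan_rel_iff:
  "(a, b) \<in> rel y \<longleftrightarrow> (a, b) \<in> (gen y \<union> (gen y)\<inverse>)\<^sup>* \<and> a \<in> triples y \<and> b \<in> triples y"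
  unfolding lan_rel_def by blast

lemma equiv_lan_rel: "equiv (triples y) (rel y)"
  unfolding lan_rel_def by (rule equiv_symcl_rtrancl_restrict)

lemma PO_lan: "PO Lan y = triples y // rel y"
  by (simp add: lan_def)

lemma PO_lanE:
  assumes "S \<in> PO Lan y"
  obtains x f v where "S = rel y `` {(x, f, v)}" "(x, f, v) \<in> triples y"
  using assms unfolding PO_lan by (metis prod_cases3 quotientE)

definition lan_shift :: "'ya \<Rightarrow> 'xo \<times> 'ya \<times> 'v \<Rightarrow> 'xo \<times> 'ya \<times> 'v" where
  "lan_shift h = (\<lambda>(x, f, v). (x, Cmp Y h f, v))"

lemma lan_shift_apply [simp]: "lan_shift h (x, f, v) = (x, Cmp Y h f, v)"
  by (simp add: lan_shift_def)

lemma PA_lan: "PA Lan h S = rel (Src Y h) `` {lan_shift h (SOME s. s \<in> S)}"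
  by (simp add: lan_def lan_shift_def split: prod.split)

lemma lan_gen_shift:
  assumes h: "h \<in> hom Y y' y" and "(a, b) \<in> gen y"
  shows "(lan_shift h a, lan_shift h b) \<in> gen y'"
proof -
  from \<open>(a, b) \<in> gen y\<close> obtain x x' g f w where ab: "a = (x', Cmp Y f (FA F g), w)" "b = (x, f, PA \<chi> g w)"
    and g: "g \<in> hom X x x'" and f: "f \<in> hom Y y (FO F x)" and w: "w \<in> PO \<chi> x'"
    by (rule lan_genE)
  have "Cmp Y h (Cmp Y f (FA F g)) = Cmp Y (Cmp Y h f) (FA F g)"
    using category_Cmp_assoc[OF Y h f functor_hom[OF F X g]] by simp
  then show ?thesis
    using lan_genI[OF g category_Cmp_hom[OF Y h f] w] by (simp add: ab)
qed

lemma lan_triples_shift: "h \<in> hom Y y' y \<Longrightarrow> a \<in> triples y \<Longrightarrow> lan_shift h a \<in> triples y'"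
  by (cases a) (auto simp: triples_iff intro: category_Cmp_hom[OF Y])

lemma lan_rel_shift:
  assumes h: "h \<in> hom Y y' y" and "(a, b) \<in> rel y"
  shows "(lan_shift h a, lan_shift h b) \<in> rel y'"
  using assms(2) rtrancl_symcl_map[of "gen y" "lan_shift h" "gen y'"] lan_gen_shift[OF h]
    lan_triples_shift[OF h]
  unfolding lan_rel_iff by blast

lemma PA_lan_class:
  assumes h: "h \<in> hom Y y' y" and a: "a \<in> triples y"
  shows "PA Lan h (rel y `` {a}) = rel y' `` {lan_shift h a}"
proof -
  let ?s = "SOME s. s \<in> rel y `` {a}"
  have "rel y `` {a} \<noteq> {}"
    using equiv_class_self[OF equiv_lan_rel a] by blast
  then have "(a, ?s) \<in> rel y"
    by (metis Image_singleton_iff some_in_eq)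
  then have "(lan_shift h a, lan_shift h ?s) \<in> rel y'"
    by (rule lan_rel_shift[OF h])
  then have "rel y' `` {lan_shift h ?s} = rel y' `` {lan_shift h a}"
    by (rule equiv_class_eq[OF equiv_lan_rel, symmetric])
  with h show ?thesis
    by (simp add: PA_lan hom_def)
qed

definition lan_unit :: "'xo \<Rightarrow> 'v \<Rightarrow> ('xo \<times> 'ya \<times> 'v) set" where
  "lan_unit x v = rel (FO F x) `` {(x, Idt Y (FO F x), v)}"

lemma lan_unit_triple: "x \<in> Ob X \<Longrightarrow> v \<in> PO \<chi> x \<Longrightarrow> (x, Idt Y (FO F x), v) \<in> triples (FO F x)"
  by (simp add: triples_iff category_Idt_hom[OF Y] functor_Ob[OF F])

lemma lan_unit_PO: "x \<in> Ob X \<Longrightarrow> v \<in> PO \<chi> x \<Longrightarrow> lan_unit x v \<in> PO Lan (FO F x)"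
  unfolding lan_unit_def PO_lan by (rule quotientI[OF lan_unit_triple])

lemma PA_lan_unit:
  assumes "f \<in> hom Y y (FO F x)" and "x \<in> Ob X" and "v \<in> PO \<chi> x"
  shows "PA Lan f (lan_unit x v) = rel y `` {(x, f, v)}"
  using assms by (simp add: lan_unit_def PA_lan_class lan_unit_triple category_Cmp_Idt_right[OF Y])

lemma lan_unit_natural:
  assumes g: "g \<in> hom X x x'" and w: "w \<in> PO \<chi> x'"
  shows "lan_unit x (PA \<chi> g w) = PA Lan (FA F g) (lan_unit x' w)"
proof -
  have x: "x \<in> Ob X" "x' \<in> Ob X" using category_hom_Ob[OF X g] by auto
  have Fg: "FA F g \<in> hom Y (FO F x) (FO F x')" by (rule functor_hom[OF F X g])
  have "((x', FA F g, w), (x, Idt Y (FO F x), PA \<chi> g w)) \<in> gen (FO F x)"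
    using lan_genI[OF g category_Idt_hom[OF Y functor_Ob[OF F x(1)]] w]
    by (simp add: category_Cmp_Idt_left[OF Y Fg])
  moreover have "(x', FA F g, w) \<in> triples (FO F x)"
    using x(2) Fg w by (simp add: triples_iff)
  moreover have "(x, Idt Y (FO F x), PA \<chi> g w) \<in> triples (FO F x)"
    by (rule lan_unit_triple[OF x(1) presheaf_PA_closed[OF X \<chi> g w]])
  ultimately have "((x', FA F g, w), (x, Idt Y (FO F x), PA \<chi> g w)) \<in> rel (FO F x)"
    by (auto simp: lan_rel_iff)
  then show ?thesis
    by (simp add: lan_unit_def PA_lan_unit[OF Fg x(2) w, unfolded lan_unit_def]
        equiv_class_eq[OF equiv_lan_rel])
qed

definition lan_extend :: "('yo, 'ya, 'w) psh \<Rightarrow> ('xo \<Rightarrow> 'v \<Rightarrow> 'w) \<Rightarrow> 'yo \<Rightarrow> ('xo \<times> 'ya \<times> 'v) set \<Rightarrow> 'w"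
  where "lan_extend Q \<theta> = (\<lambda>y\<in>Ob Y. \<lambda>S\<in>PO Lan y. the_elem ((\<lambda>(x, f, v). PA Q f (\<theta> x v)) ` S))"

definition lan_restrict :: "('yo \<Rightarrow> ('xo \<times> 'ya \<times> 'v) set \<Rightarrow> 'w) \<Rightarrow> 'xo \<Rightarrow> 'v \<Rightarrow> 'w"
  where "lan_restrict \<theta>' = (\<lambda>x\<in>Ob X. \<lambda>v\<in>PO \<chi> x. \<theta>' (FO F x) (lan_unit x v))"

lemma lan_extend_class:
  assumes Q: "presheaf Y Q" and \<theta>: "nat_trans X \<chi> (pb F Q) \<theta>" and a: "(x, f, v) \<in> triples y"
  shows "lan_extend Q \<theta> y (rel y `` {(x, f, v)}) = PA Q f (\<theta> x v)"
proof -
  let ?val = "\<lambda>(x, f, v). PA Q f (\<theta> x v)"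
  have gen_invariant: "?val a = ?val b" if "(a, b) \<in> gen y" for a b
  proof -
    from that obtain x x' g f w where ab: "a = (x', Cmp Y f (FA F g), w)" "b = (x, f, PA \<chi> g w)"
      and g: "g \<in> hom X x x'" and f: "f \<in> hom Y y (FO F x)" and w: "w \<in> PO \<chi> x'"
      by (rule lan_genE)
    have "\<theta> x' w \<in> PO Q (FO F x')"
      using nat_trans_PO[OF \<theta> _ w] category_hom_Ob[OF X g] by (simp add:)
    then have "?val a = PA Q f (PA Q (FA F g) (\<theta> x' w))"
      by (simp add: ab presheaf_PA_Cmp[OF Q f functor_hom[OF F X g]])
    also have "\<dots> = ?val b"
      using nat_trans_PA[OF \<theta> g w] by (simp add: ab)
    finally show ?thesis .
  qed
  have y: "y \<in> Ob Y" using a category_hom_Ob[OF Y] by (auto simp: triples_iff)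
  have "?val b = ?val (x, f, v)" if "b \<in> rel y `` {(x, f, v)}" for b
  proof -
    have "((x, f, v), b) \<in> (gen y \<union> (gen y)\<inverse>)\<^sup>*" using that by (simp add: lan_rel_iff)
    from rtrancl_symcl_invariant[of "gen y" ?val, OF gen_invariant this] show ?thesis by simp
  qed
  moreover have "rel y `` {(x, f, v)} \<noteq> {}"
    using equiv_class_self[OF equiv_lan_rel a] by blast
  moreover have "rel y `` {(x, f, v)} \<in> PO Lan y"
    using a by (simp add: PO_lan quotientI)
  ultimately show ?thesis
    using y by (simp add: lan_extend_def the_elem_image_unique)
qed

lemma lan_extend_nat_trans:
  assumes Q: "presheaf Y Q" and \<theta>: "nat_trans X \<chi> (pb F Q) \<theta>"
  shows "nat_trans Y Lan Q (lan_extend Q \<theta>)"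
proof (rule nat_transI)
  fix y S assume "S \<in> PO Lan y"
  then obtain x f v where S: "S = rel y `` {(x, f, v)}" and a: "(x, f, v) \<in> triples y"
    by (rule PO_lanE)
  have f: "f \<in> hom Y y (FO F x)" and v: "\<theta> x v \<in> PO Q (FO F x)"
    using a nat_trans_PO[OF \<theta>] by (auto simp: triples_iff)
  show "lan_extend Q \<theta> y S \<in> PO Q y"
    using presheaf_PA_closed[OF Y Q f v] by (simp add: S lan_extend_class[OF Q \<theta> a])
next
  fix h y' y S assume h: "h \<in> hom Y y' y" and "S \<in> PO Lan y"
  from \<open>S \<in> PO Lan y\<close> obtain x f v where S: "S = rel y `` {(x, f, v)}" and a: "(x, f, v) \<in> triples y"
    by (rule PO_lanE)
  have f: "f \<in> hom Y y (FO F x)" and v: "\<theta> x v \<in> PO Q (FO F x)"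
    using a nat_trans_PO[OF \<theta>] by (auto simp: triples_iff)
  have "lan_extend Q \<theta> y' (PA Lan h S) = PA Q (Cmp Y h f) (\<theta> x v)"
    using lan_extend_class[OF Q \<theta> lan_triples_shift[OF h a, unfolded lan_shift_apply]]
    by (simp add: S PA_lan_class[OF h a])
  also have "\<dots> = PA Q h (lan_extend Q \<theta> y S)"
    by (simp add: S lan_extend_class[OF Q \<theta> a] presheaf_PA_Cmp[OF Q h f v])
  finally show "lan_extend Q \<theta> y' (PA Lan h S) = PA Q h (lan_extend Q \<theta> y S)" .
qed

lemma lan_restrict_nat_trans:
  assumes \<theta>': "nat_trans Y Lan Q \<theta>'"
  shows "nat_trans X \<chi> (pb F Q) (lan_restrict \<theta>')"
proof (rule nat_transI)
  fix x v assume "x \<in> Ob X" "v \<in> PO \<chi> x"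
  then show "lan_restrict \<theta>' x v \<in> PO (pb F Q) x"
    by (simp add: lan_restrict_def nat_trans_PO[OF \<theta>'] functor_Ob[OF F] lan_unit_PO)
next
  fix g x x' w assume g: "g \<in> hom X x x'" and w: "w \<in> PO \<chi> x'"
  have x: "x \<in> Ob X" "x' \<in> Ob X" using category_hom_Ob[OF X g] by auto
  have "lan_restrict \<theta>' x (PA \<chi> g w) = \<theta>' (FO F x) (PA Lan (FA F g) (lan_unit x' w))"
    using x presheaf_PA_closed[OF X \<chi> g w] by (simp add: lan_restrict_def lan_unit_natural[OF g w])
  also have "\<dots> = PA (pb F Q) g (lan_restrict \<theta>' x' w)"
    using x w by (simp add: lan_restrict_def nat_trans_PA[OF \<theta>' functor_hom[OF F X g]]
        lan_unit_PO)
  finally show "lan_restrict \<theta>' x (PA \<chi> g w) = PA (pb F Q) g (lan_restrict \<theta>' x' w)" .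
qed

lemma lan_extend_psh_hom:
  assumes "presheaf Y Q" and "nat_trans X \<chi> (pb F Q) \<theta>"
  shows "lan_extend Q \<theta> \<in> psh_hom Y Lan Q"
  using lan_extend_nat_trans[OF assms] unfolding lan_extend_def by (rule psh_hom_restrict)

lemma lan_restrict_psh_hom:
  assumes "nat_trans Y Lan Q \<theta>'"
  shows "lan_restrict \<theta>' \<in> psh_hom X \<chi> (pb F Q)"
  using lan_restrict_nat_trans[OF assms] unfolding lan_restrict_def by (rule psh_hom_restrict)

lemma lan_restrict_extend:
  assumes Q: "presheaf Y Q" and \<theta>: "\<theta> \<in> psh_hom X \<chi> (pb F Q)"
  shows "lan_restrict (lan_extend Q \<theta>) = \<theta>"
proof (rule psh_hom_eqI[OF lan_restrict_psh_hom \<theta>])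
  have \<theta>': "nat_trans X \<chi> (pb F Q) \<theta>" by (rule psh_hom_nat_trans[OF \<theta>])
  show "nat_trans Y Lan Q (lan_extend Q \<theta>)" by (rule lan_extend_nat_trans[OF Q \<theta>'])
  fix x v assume x: "x \<in> Ob X" and v: "v \<in> PO \<chi> x"
  have "\<theta> x v \<in> PO Q (FO F x)" using nat_trans_PO[OF \<theta>' x v] by (simp add:)
  then show "lan_restrict (lan_extend Q \<theta>) x v = \<theta> x v"
    using x v by (simp add: lan_restrict_def lan_unit_def lan_extend_class[OF Q \<theta>' lan_unit_triple]
        presheaf_PA_Idt[OF Q] functor_Ob[OF F])
qed

lemma lan_extend_restrict:
  assumes Q: "presheaf Y Q" and \<theta>': "\<theta>' \<in> psh_hom Y Lan Q"
  shows "lan_extend Q (lan_restrict \<theta>') = \<theta>'"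
proof (rule psh_hom_eqI[OF lan_extend_psh_hom[OF Q] \<theta>'])
  have \<theta>'': "nat_trans Y Lan Q \<theta>'" by (rule psh_hom_nat_trans[OF \<theta>'])
  show "nat_trans X \<chi> (pb F Q) (lan_restrict \<theta>')" by (rule lan_restrict_nat_trans[OF \<theta>''])
  fix y S assume "S \<in> PO Lan y"
  then obtain x f v where S: "S = rel y `` {(x, f, v)}" and a: "(x, f, v) \<in> triples y"
    by (rule PO_lanE)
  have x: "x \<in> Ob X" and f: "f \<in> hom Y y (FO F x)" and v: "v \<in> PO \<chi> x"
    using a by (auto simp: triples_iff)
  have "lan_extend Q (lan_restrict \<theta>') y S = PA Q f (lan_restrict \<theta>' x v)"
    by (simp add: S lan_extend_class[OF Q lan_restrict_nat_trans[OF \<theta>''] a])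
  also have "\<dots> = PA Q f (\<theta>' (FO F x) (lan_unit x v))"
    using x v by (simp add: lan_restrict_def)
  also have "\<dots> = \<theta>' y S"
    by (simp add: S nat_trans_PA[OF \<theta>'' f lan_unit_PO[OF x v], symmetric] PA_lan_unit[OF f x v])
  finally show "lan_extend Q (lan_restrict \<theta>') y S = \<theta>' y S" .
qed

theorem lan_extend_bij:
  assumes "presheaf Y Q"
  shows "bij_betw (lan_extend Q) (psh_hom X \<chi> (pb F Q)) (psh_hom Y Lan Q)"
  by (rule bij_betwI[where g = lan_restrict])
    (auto simp: assms lan_extend_psh_hom lan_restrict_psh_hom lan_restrict_extend lan_extend_restrict
      psh_hom_nat_trans)

lemma lan_extend_vcomp:
  assumes Q: "presheaf Y Q" and Q': "presheaf Y Q'"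
    and \<theta>: "nat_trans X \<chi> (pb F Q) \<theta>" and \<mu>: "nat_trans Y Q Q' \<mu>"
  shows "lan_extend Q' (psh_vcomp X \<chi> \<theta> (\<lambda>x. \<mu> (FO F x))) = psh_vcomp Y Lan (lan_extend Q \<theta>) \<mu>"
proof (intro ext)
  have \<theta>\<mu>: "nat_trans X \<chi> (pb F Q') (psh_vcomp X \<chi> \<theta> (\<lambda>x. \<mu> (FO F x)))"
    by (rule nat_trans_vcomp[OF X \<chi> \<theta> nat_trans_pb[OF X F \<mu>]])
  fix y S
  show "lan_extend Q' (psh_vcomp X \<chi> \<theta> (\<lambda>x. \<mu> (FO F x))) y S = psh_vcomp Y Lan (lan_extend Q \<theta>) \<mu> y S"
  proof (cases "y \<in> Ob Y \<and> S \<in> PO Lan y")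
    case True
    then obtain x f v where S: "S = rel y `` {(x, f, v)}" and a: "(x, f, v) \<in> triples y"
      by (auto elim: PO_lanE)
    have x: "x \<in> Ob X" and f: "f \<in> hom Y y (FO F x)" and v: "v \<in> PO \<chi> x"
      using a by (auto simp: triples_iff)
    have "\<theta> x v \<in> PO Q (FO F x)" using nat_trans_PO[OF \<theta> x v] by (simp add:)
    have "lan_extend Q' (psh_vcomp X \<chi> \<theta> (\<lambda>x. \<mu> (FO F x))) y S
        = PA Q' f (psh_vcomp X \<chi> \<theta> (\<lambda>x. \<mu> (FO F x)) x v)"
      by (simp add: S lan_extend_class[OF Q' \<theta>\<mu> a])
    also have "\<dots> = \<mu> y (lan_extend Q \<theta> y S)"
      using x v \<open>\<theta> x v \<in> PO Q (FO F x)\<close>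
      by (simp add: psh_vcomp_def S lan_extend_class[OF Q \<theta> a] nat_trans_PA[OF \<mu> f])
    also have "\<dots> = psh_vcomp Y Lan (lan_extend Q \<theta>) \<mu> y S"
      using True by (simp add: psh_vcomp_def)
    finally show ?thesis .
  qed (auto simp: lan_extend_def psh_vcomp_def)
qed

end

section \<open>The categories \<open>B\<^sup>+\<close> and \<open>B\<^sup>-\<close> of a refinement system\<close>

lemma Ob_Bplus: "Ob (Bplus D T t B) = {(P, e). P \<in> Ob D \<and> e \<in> hom T (FO t P) B}"
  by (simp add: Bplus_def Let_def)

lemma Bplus_simps [simp]:
  "Src (Bplus D T t B) (x, \<alpha>, x') = x"
  "Tgt (Bplus D T t B) (x, \<alpha>, x') = x'"
  "Idt (Bplus D T t B) x = (x, Idt D (fst x), x)"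
  "Cmp (Bplus D T t B) (x, \<alpha>, x') (y, \<beta>, y') = (x, Cmp D \<alpha> \<beta>, y')"
  by (simp_all add: Bplus_def Let_def)

lemma hom_Bplus:
  "h \<in> hom (Bplus D T t B) x y \<longleftrightarrow> (\<exists>\<alpha>. h = (x, \<alpha>, y) \<and> x \<in> Ob (Bplus D T t B) \<and> y \<in> Ob (Bplus D T t B)
     \<and> \<alpha> \<in> hom D (fst x) (fst y) \<and> snd x = Cmp T (FA t \<alpha>) (snd y))"
  unfolding hom_def Bplus_def derivs_def Let_def by (cases h) auto

lemma Ob_Bminus: "Ob (Bminus D T t B) = {(d, R). R \<in> Ob D \<and> d \<in> hom T B (FO t R)}"
  by (simp add: Bminus_def Bminus_op_def opc_def Let_def)

lemma Idt_Bminus [simp]: "Idt (Bminus D T t B) y = (y, Idt D (snd y), y)"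
  by (simp add: Bminus_def Bminus_op_def opc_def Let_def)

lemma hom_Bminus:
  "g \<in> hom (Bminus D T t B) y y' \<longleftrightarrow> (\<exists>\<gamma>. g = (y', \<gamma>, y) \<and> y \<in> Ob (Bminus D T t B) \<and> y' \<in> Ob (Bminus D T t B)
     \<and> \<gamma> \<in> hom D (snd y') (snd y) \<and> Cmp T (fst y') (FA t \<gamma>) = fst y)"
  unfolding hom_def Bminus_def Bminus_op_def opc_def derivs_def Let_def by (cases g) auto

lemma cplus_simps [simp]:
  "FO (cplus T c) (P, e) = (P, Cmp T e c)"
  "FA (cplus T c) ((P, e), \<alpha>, (Q, e')) = ((P, Cmp T e c), \<alpha>, (Q, Cmp T e' c))"
  "fst (FO (cplus T c) x) = fst x"
  by (simp_all add: cplus_def Let_def split: prod.split)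

lemma cminus_simps [simp]:
  "FO (cminus T c) (d, R) = (Cmp T c d, R)"
  "fst (snd (FA (cminus T c) g)) = fst (snd g)"
  by (simp_all add: cminus_def Let_def split: prod.split)

lemma derivs_iff: "\<alpha> \<in> derivs D T t P e Q \<longleftrightarrow> \<alpha> \<in> hom D P Q \<and> FA t \<alpha> = e"
  by (simp add: derivs_def)

definition Der_bracket :: "('do, 'da) cat \<Rightarrow> ('to, 'ta) cat \<Rightarrow> ('do, 'da, 'to, 'ta) ftr \<Rightarrow> 'to
    \<Rightarrow> 'ta \<times> 'do \<Rightarrow> ('do \<times> 'ta, ('do \<times> 'ta) \<times> 'da \<times> ('do \<times> 'ta), 'da) psh" where
  "Der_bracket D T t B y =
     \<lparr>PO = (\<lambda>x. PO (Der D T t) (bracketO T x y)),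
      PA = (\<lambda>f. PA (Der D T t) (bracketA T f (Idt (Bminus D T t B) y)))\<rparr>"

lemma PA_Der_bracketA:
  "PA (Der D T t) (bracketA T f g) \<alpha> = Cmp D (Cmp D (fst (snd f)) \<alpha>) (fst (snd g))"
  by (cases f; cases g) (simp add: Der_def bracketA_def)

lemma PO_Der_bracket [simp]:
  "PO (Der_bracket D T t B y) x = derivs D T t (fst x) (Cmp T (snd x) (fst y)) (snd y)"
  by (simp add: Der_bracket_def Der_def bracketO_def)

lemma PA_Der_bracket [simp]:
  "PA (Der_bracket D T t B y) f \<alpha> = Cmp D (Cmp D (fst (snd f)) \<alpha>) (Idt D (snd y))"
  by (simp add: Der_bracket_def PA_Der_bracketA)

lemma PO_perp: "PO (perp D T t B \<psi>) y = psh_hom (Bplus D T t B) \<psi> (Der_bracket D T t B y)"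
  unfolding set_eq_iff psh_hom_iff by (simp add: perp_def Let_def Der_bracket_def)

lemma PA_perp:
  "PA (perp D T t B \<psi>) g \<theta>
     = psh_vcomp (Bplus D T t B) \<psi> \<theta> (\<lambda>x \<alpha>. Cmp D (Cmp D (Idt D (fst x)) \<alpha>) (fst (snd g)))"
  by (simp add: perp_def Let_def psh_vcomp_def PA_Der_bracketA)

locale refinement =
  fixes D :: "('do, 'da) cat" and T :: "('to, 'ta) cat" and t :: "('do, 'da, 'to, 'ta) ftr"
  assumes refinement_system: "refinement_system D T t"
begin

lemma D: "category D" and T: "category T" and t: "is_functor D T t"
  using refinement_system unfolding refinement_system_def by auto

lemma Bplus_homI:
  assumes \<alpha>: "\<alpha> \<in> hom D P Q" and e': "e' \<in> hom T (FO t Q) B" and e: "e = Cmp T (FA t \<alpha>) e'"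
  shows "((P, e), \<alpha>, (Q, e')) \<in> hom (Bplus D T t B) (P, e) (Q, e')"
proof -
  have "e \<in> hom T (FO t P) B"
    using e category_Cmp_hom[OF T functor_hom[OF t D \<alpha>] e'] by simp
  then show ?thesis
    using assms category_hom_Ob[OF D \<alpha>] by (auto simp: hom_Bplus Ob_Bplus)
qed

lemma Bplus_homE:
  assumes "h \<in> hom (Bplus D T t B) x y"
  obtains P e Q e' \<alpha> where "x = (P, e)" "y = (Q, e')" "h = ((P, e), \<alpha>, (Q, e'))"
    "\<alpha> \<in> hom D P Q" "e' \<in> hom T (FO t Q) B" "e = Cmp T (FA t \<alpha>) e'"
  using assms unfolding hom_Bplus Ob_Bplus by auto

lemma category_Bplus: "category (Bplus D T t B)"
proof -
  let ?C = "Bplus D T t B"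
  have Ar: "f \<in> Ar ?C \<longleftrightarrow> f \<in> hom ?C (Src ?C f) (Tgt ?C f)" for f
    by (simp add: hom_def)
  have Ob: "Src ?C f \<in> Ob ?C \<and> Tgt ?C f \<in> Ob ?C" if "f \<in> Ar ?C" for f
    using that by (auto simp: Bplus_def Let_def)
  have Idt: "Idt ?C x \<in> hom ?C x x" if "x \<in> Ob ?C" for x
    using that category_Idt_hom[OF D] functor_Idt[OF t] category_Cmp_Idt_left[OF T]
    by (auto simp: Ob_Bplus intro!: Bplus_homI)
  have Cmp: "Cmp ?C f g \<in> hom ?C x z" if "f \<in> hom ?C x y" "g \<in> hom ?C y z" for f g x y z
  proof -
    from that(1) obtain P e Q e' \<alpha> where f: "x = (P, e)" "y = (Q, e')" "f = ((P, e), \<alpha>, (Q, e'))"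
      "\<alpha> \<in> hom D P Q" "e = Cmp T (FA t \<alpha>) e'" by (rule Bplus_homE)
    from that(2) obtain R e'' \<beta> where g: "z = (R, e'')" "g = ((Q, e'), \<beta>, (R, e''))"
      "\<beta> \<in> hom D Q R" "e'' \<in> hom T (FO t R) B" "e' = Cmp T (FA t \<beta>) e''"
      by (rule Bplus_homE) (use f(2) in auto)
    have "e = Cmp T (FA t (Cmp D \<alpha> \<beta>)) e''"
      using f g by (simp add: functor_Cmp[OF t f(4) g(3)]
          category_Cmp_assoc[OF T functor_hom[OF t D f(4)] functor_hom[OF t D g(3)] g(4)])
    then show ?thesis
      using f g by (auto intro!: Bplus_homI category_Cmp_hom[OF D])
  qed
  have unit: "Cmp ?C (Idt ?C (Src ?C f)) f = f \<and> Cmp ?C f (Idt ?C (Tgt ?C f)) = f" if "f \<in> Ar ?C" for f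
    using that unfolding Ar
    by (auto elim!: Bplus_homE simp: category_Cmp_Idt_left[OF D] category_Cmp_Idt_right[OF D])
  have assoc: "Cmp ?C (Cmp ?C f g) h = Cmp ?C f (Cmp ?C g h)"
    if "f \<in> Ar ?C" "g \<in> Ar ?C" "h \<in> Ar ?C" "Tgt ?C f = Src ?C g" "Tgt ?C g = Src ?C h" for f g h
    using that unfolding Ar by (auto elim!: Bplus_homE simp: category_Cmp_assoc[OF D])
  show ?thesis
    unfolding category_def using Ob Idt Cmp unit assoc by blast
qed

lemma is_functor_cplus:
  assumes c: "c \<in> hom T A B"
  shows "is_functor (Bplus D T t A) (Bplus D T t B) (cplus T c)"
  unfolding is_functor_def
proof (intro conjI ballI impI)
  fix x assume "x \<in> Ob (Bplus D T t A)"
  then show "FO (cplus T c) x \<in> Ob (Bplus D T t B)"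
    using category_Cmp_hom[OF T _ c] by (auto simp: Ob_Bplus)
next
  fix x y g assume "g \<in> hom (Bplus D T t A) x y"
  then obtain P e Q e' \<alpha> where g: "x = (P, e)" "y = (Q, e')" "g = ((P, e), \<alpha>, (Q, e'))"
    "\<alpha> \<in> hom D P Q" "e' \<in> hom T (FO t Q) A" "e = Cmp T (FA t \<alpha>) e'" by (rule Bplus_homE)
  have "Cmp T e c = Cmp T (FA t \<alpha>) (Cmp T e' c)"
    using g category_Cmp_assoc[OF T functor_hom[OF t D g(4)] g(5) c] by simp
  then have "((P, Cmp T e c), \<alpha>, (Q, Cmp T e' c)) \<in> hom (Bplus D T t B) (P, Cmp T e c) (Q, Cmp T e' c)"
    by (rule Bplus_homI[OF g(4) category_Cmp_hom[OF T g(5) c]])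
  moreover have "FA (cplus T c) g = ((P, Cmp T e c), \<alpha>, (Q, Cmp T e' c))"
    using g(1-3) by simp
  ultimately show "FA (cplus T c) g \<in> hom (Bplus D T t B) (FO (cplus T c) x) (FO (cplus T c) y)"
    using g(1,2) by simp
next
  fix x show "FA (cplus T c) (Idt (Bplus D T t A) x) = Idt (Bplus D T t B) (FO (cplus T c) x)"
    by (cases x) simp
next
  fix f g show "FA (cplus T c) (Cmp (Bplus D T t A) f g)
      = Cmp (Bplus D T t B) (FA (cplus T c) f) (FA (cplus T c) g)"
    by (cases f; cases g) (simp add: cplus_def Let_def split: prod.split)
qed

lemma presheaf_Der_bracket:
  assumes "y \<in> Ob (Bminus D T t B)"
  shows "presheaf (Bplus D T t B) (Der_bracket D T t B y)"
proof -
  obtain d R where y: "y = (d, R)" and R: "R \<in> Ob D" and d: "d \<in> hom T B (FO t R)"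
    using assms by (auto simp: Ob_Bminus)
  let ?C = "Bplus D T t B"
  show ?thesis
    unfolding presheaf_def
  proof (intro conjI ballI impI)
    fix x x' f \<alpha> assume "f \<in> hom ?C x x'" and \<alpha>: "\<alpha> \<in> PO (Der_bracket D T t B y) x'"
    from \<open>f \<in> hom ?C x x'\<close> obtain P e Q e' \<beta> where f: "x = (P, e)" "x' = (Q, e')" "f = ((P, e), \<beta>, (Q, e'))"
      "\<beta> \<in> hom D P Q" "e' \<in> hom T (FO t Q) B" "e = Cmp T (FA t \<beta>) e'" by (rule Bplus_homE)
    have \<alpha>: "\<alpha> \<in> hom D Q R" "FA t \<alpha> = Cmp T e' d" using \<alpha> f y by (simp_all add: derivs_iff)
    have "FA t (Cmp D \<beta> \<alpha>) = Cmp T e d"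
      using f \<alpha> by (simp add: functor_Cmp[OF t] category_Cmp_assoc[OF T functor_hom[OF t D f(4)] f(5) d])
    then show "PA (Der_bracket D T t B y) f \<alpha> \<in> PO (Der_bracket D T t B y) x"
      using f y category_Cmp_hom[OF D f(4) \<alpha>(1)]
      by (simp add: derivs_iff category_Cmp_Idt_right[OF D])
  next
    fix x \<alpha> assume "x \<in> Ob ?C" and "\<alpha> \<in> PO (Der_bracket D T t B y) x"
    then show "PA (Der_bracket D T t B y) (Idt ?C x) \<alpha> = \<alpha>"
      using y by (auto simp: derivs_iff category_Cmp_Idt_left[OF D] category_Cmp_Idt_right[OF D])
  next
    fix f g \<alpha> assume "f \<in> Ar ?C" "g \<in> Ar ?C" "Tgt ?C f = Src ?C g"
      and \<alpha>: "\<alpha> \<in> PO (Der_bracket D T t B y) (Tgt ?C g)"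
    then have "f \<in> hom ?C (Src ?C f) (Src ?C g)" "g \<in> hom ?C (Src ?C g) (Tgt ?C g)"
      by (simp_all add: hom_def)
    then obtain \<beta> \<beta>' where \<beta>: "fst (snd f) = \<beta>" "\<beta> \<in> hom D (fst (Src ?C f)) (fst (Src ?C g))"
      and \<beta>': "fst (snd g) = \<beta>'" "\<beta>' \<in> hom D (fst (Src ?C g)) (fst (Tgt ?C g))"
      and fg: "Cmp ?C f g = (Src ?C f, Cmp D \<beta> \<beta>', Tgt ?C g)"
      by (auto elim!: Bplus_homE)
    have \<alpha>': "\<alpha> \<in> hom D (fst (Tgt ?C g)) R" using \<alpha> y by (simp add: derivs_iff)
    have \<beta>'\<alpha>: "Cmp D \<beta>' \<alpha> \<in> hom D (fst (Src ?C g)) R" by (rule category_Cmp_hom[OF D \<beta>'(2) \<alpha>'])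
    show "PA (Der_bracket D T t B y) (Cmp ?C f g) \<alpha>
        = PA (Der_bracket D T t B y) f (PA (Der_bracket D T t B y) g \<alpha>)"
      using \<beta> \<beta>' y
      by (simp add: fg category_Cmp_assoc[OF D \<beta>(2) \<beta>'(2) \<alpha>'] category_Cmp_Idt_right[OF D \<beta>'\<alpha>])
  qed
qed

lemma nat_trans_Der_bracket_postcomp:
  assumes "g \<in> hom (Bminus D T t B) y y'"
  shows "nat_trans (Bplus D T t B) (Der_bracket D T t B y') (Der_bracket D T t B y)
           (\<lambda>x \<alpha>. Cmp D (Cmp D (Idt D (fst x)) \<alpha>) (fst (snd g)))"
proof -
  obtain d R d' R' \<gamma> where y: "y = (d, R)" and y': "y' = (d', R')" and g: "g = (y', \<gamma>, y)"
    and \<gamma>: "\<gamma> \<in> hom D R' R" and d: "Cmp T d' (FA t \<gamma>) = d" and d': "d' \<in> hom T B (FO t R')"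
    using assms by (auto simp: hom_Bminus Ob_Bminus)
  show ?thesis
  proof (rule nat_transI)
    fix x \<alpha> assume "x \<in> Ob (Bplus D T t B)" and \<alpha>: "\<alpha> \<in> PO (Der_bracket D T t B y') x"
    then obtain P e where x: "x = (P, e)" and e: "e \<in> hom T (FO t P) B"
      by (auto simp: Ob_Bplus)
    have \<alpha>: "\<alpha> \<in> hom D P R'" "FA t \<alpha> = Cmp T e d'" using \<alpha> x y' by (simp_all add: derivs_iff)
    have "FA t (Cmp D \<alpha> \<gamma>) = Cmp T e d"
      using \<alpha> d by (simp add: functor_Cmp[OF t \<alpha>(1) \<gamma>] category_Cmp_assoc[OF T e d' functor_hom[OF t D \<gamma>]])
    then show "Cmp D (Cmp D (Idt D (fst x)) \<alpha>) (fst (snd g)) \<in> PO (Der_bracket D T t B y) x"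
      using x y g category_Cmp_hom[OF D \<alpha>(1) \<gamma>]
      by (simp add: derivs_iff category_Cmp_Idt_left[OF D \<alpha>(1)])
  next
    fix f x x' \<alpha> assume "f \<in> hom (Bplus D T t B) x x'" and \<alpha>: "\<alpha> \<in> PO (Der_bracket D T t B y') x'"
    from \<open>f \<in> hom (Bplus D T t B) x x'\<close> obtain P e Q e' \<beta> where f: "x = (P, e)" "x' = (Q, e')" "f = ((P, e), \<beta>, (Q, e'))"
      "\<beta> \<in> hom D P Q" by (rule Bplus_homE)
    have \<alpha>: "\<alpha> \<in> hom D Q R'" using \<alpha> f y' by (simp add: derivs_iff)
    have \<beta>\<alpha>: "Cmp D \<beta> \<alpha> \<in> hom D P R'" by (rule category_Cmp_hom[OF D f(4) \<alpha>])
    have \<alpha>\<gamma>: "Cmp D \<alpha> \<gamma> \<in> hom D Q R" by (rule category_Cmp_hom[OF D \<alpha> \<gamma>])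
    show "Cmp D (Cmp D (Idt D (fst x)) (PA (Der_bracket D T t B y') f \<alpha>)) (fst (snd g))
        = PA (Der_bracket D T t B y) f (Cmp D (Cmp D (Idt D (fst x')) \<alpha>) (fst (snd g)))"
      using f y y' g
      by (simp add: category_Cmp_Idt_left[OF D \<alpha>] category_Cmp_Idt_left[OF D \<beta>\<alpha>]
          category_Cmp_Idt_right[OF D \<beta>\<alpha>] category_Cmp_Idt_right[OF D category_Cmp_hom[OF D f(4) \<alpha>\<gamma>]]
          category_Cmp_assoc[OF D f(4) \<alpha> \<gamma>])
  qed
qed

text \<open>The key identity \<open>(c\<^sup>+)\<^sup>* Der(\<langle>- | y\<rangle>\<^sub>B) = Der(\<langle>- | c\<^sup>-y\<rangle>\<^sub>A)\<close>; on objects it is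
  the associativity \<open>(e ; c) ; d = e ; (c ; d)\<close>.\<close>
lemma PO_pb_cminus_perp:
  assumes c: "c \<in> hom T A B" and "y \<in> Ob (Bminus D T t B)"
  shows "PO (pb (cminus T c) (perp D T t A \<psi>)) y
           = psh_hom (Bplus D T t A) \<psi> (pb (cplus T c) (Der_bracket D T t B y))"
  unfolding pb_simps PO_perp
proof (rule psh_hom_cong)
  obtain d R where y: "y = (d, R)" and d: "d \<in> hom T B (FO t R)"
    using assms(2) by (auto simp: Ob_Bminus)
  fix x assume "x \<in> Ob (Bplus D T t A)"
  then obtain P e where x: "x = (P, e)" and e: "e \<in> hom T (FO t P) A" by (auto simp: Ob_Bplus)
  show "PO (Der_bracket D T t A (FO (cminus T c) y)) x = PO (pb (cplus T c) (Der_bracket D T t B y)) x"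
    by (simp add: x y category_Cmp_assoc[OF T e c d])
next
  fix f assume "f \<in> Ar (Bplus D T t A)"
  then have "f \<in> hom (Bplus D T t A) (Src (Bplus D T t A) f) (Tgt (Bplus D T t A) f)"
    by (simp add: hom_def)
  then obtain P e Q e' \<beta> where "f = ((P, e), \<beta>, (Q, e'))" by (rule Bplus_homE)
  then show "PA (Der_bracket D T t A (FO (cminus T c) y)) f = PA (pb (cplus T c) (Der_bracket D T t B y)) f"
    by (cases y) (simp add: fun_eq_iff)
qed

end

theorem lemma4p11:
  fixes D :: "('do, 'da) cat" and T :: "('to, 'ta) cat" and t :: "('do, 'da, 'to, 'ta) ftr"
    and A B :: 'to and c :: 'ta
    and \<phi> :: "('do \<times> 'ta, ('do \<times> 'ta) \<times> 'da \<times> ('do \<times> 'ta), 'v) psh"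
  assumes "refinement_system D T t"
    and "A \<in> Ob T" and "B \<in> Ob T" and "c \<in> hom T A B"
    and "presheaf (Bplus D T t A) \<phi>"
  shows "psh_iso (Bminus D T t B)
           (pb (cminus T c) (perp D T t A \<phi>))
           (perp D T t B (lan (Bplus D T t A) (Bplus D T t B) (cplus T c) \<phi>))"
proof -
  note c = \<open>c \<in> hom T A B\<close>
  interpret refinement D T t by (rule refinement.intro) fact
  interpret left_kan_extension "Bplus D T t A" "Bplus D T t B" "cplus T c" \<phi>
    using category_Bplus is_functor_cplus[OF c] \<open>presheaf (Bplus D T t A) \<phi>\<close> by unfold_locales
  show ?thesis
    unfolding psh_iso_def
  proof (intro exI[of _ "\<lambda>y. lan_extend (Der_bracket D T t B y)"] conjI ballI)
    fix y assume y: "y \<in> Ob (Bminus D T t B)"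
    show "bij_betw (lan_extend (Der_bracket D T t B y))
        (PO (pb (cminus T c) (perp D T t A \<phi>)) y) (PO (perp D T t B Lan) y)"
      unfolding PO_pb_cminus_perp[OF c y] PO_perp by (rule lan_extend_bij[OF presheaf_Der_bracket[OF y]])
  next
    fix y y' g \<theta>
    assume y: "y \<in> Ob (Bminus D T t B)" and y': "y' \<in> Ob (Bminus D T t B)"
      and g: "g \<in> hom (Bminus D T t B) y y'" and \<theta>: "\<theta> \<in> PO (pb (cminus T c) (perp D T t A \<phi>)) y'"
    have "nat_trans (Bplus D T t A) \<phi> (pb (cplus T c) (Der_bracket D T t B y')) \<theta>"
      using \<theta> unfolding PO_pb_cminus_perp[OF c y'] by (rule psh_hom_nat_trans)
    from lan_extend_vcomp[OF presheaf_Der_bracket[OF y'] presheaf_Der_bracket[OF y] this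
        nat_trans_Der_bracket_postcomp[OF g]]
    show "lan_extend (Der_bracket D T t B y) (PA (pb (cminus T c) (perp D T t A \<phi>)) g \<theta>)
        = PA (perp D T t B Lan) g (lan_extend (Der_bracket D T t B y') \<theta>)"
      by (simp add: PA_perp)
  qed
qed

end
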